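(* Suppose that for each $j=0,\dots,n$ the kernel $K_j$ belongs to $\mathrm{C}^2(0,2\pi)$, satisfies $K_j''<0$ on $(0,2\pi)$, and satisfies $K_j(0)=K_j(2\pi)=-\infty$. Then every equioscillation point belongs to some open simplex $S_\sigma$, and each simplex $S_\sigma$ contains exactly one equioscillation point.
   Context: Identify the torus $\mathbb{T}=\mathbb{R}/2\pi\mathbb{Z}$ with $[0,2\pi)$. The kernels $K_j$ are $2\pi$-periodic functions $\mathbb{R}\to[-\infty,\infty)$, real-valued and concave on $(0,2\pi)$, and $K_j(0)=K_j(2\pi)$ denotes the common value of $\lim_{t\downarrow0}K_j(t)$ and $\lim_{t\uparrow2\pi}K_j(t)$. For $\mathbf{y}\in\mathbb{T}^n$ put $y_0=0$, $y_{n+1}=2\pi$, $F(\mathbf{y},t)=K_0(t)+\sum_{j=1}^nK_j(t-y_j)$. For a permutation $\sigma$ of $\{1,\dots,n\}$ ($\sigma(0)=0,\sigma(n+1)=n+1$), $S_\sigma=\{\mathbf{y}:0<y_{\sigma(1)}<\dots<y_{\sigma(n)}<2\pi\}$ and $\overline{S_\sigma}$ is the set where $0\le y_{\sigma(1)}\le\dots\le y_{\sigma(n)}\le2\pi$; for $\mathbf{y}\in\overline{S_\sigma}$, $m_{\sigma(k)}(\mathbf{y})=\sup_{t\in[y_{\sigma(k)},y_{\sigma(k+1)}]}F(\mathbf{y},t)$, $k=0,\dots,n$. A point $\mathbf{y}\in\mathbb{T}^n$ is an equioscillation point if for some $\sigma$ with $\mathbf{y}\in\overline{S_\sigma}$ one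 has $m_0(\mathbf{y})=\dots=m_n(\mathbf{y})$. *)

theory Defs
  imports "HOL-Analysis.Analysis" "HOL-Library.Extended_Real"
begin

text \<open>Points of the torus T^n, identified with [0,2pi)^n. A point is a function
  y :: nat => real with coordinates y 1, ..., y n in [0, 2pi); coordinates outside
  {1..n} are fixed to 0 so that points are uniquely represented.\<close>
definition torus_pts :: "nat \<Rightarrow> (nat \<Rightarrow> real) set" where
  "torus_pts n = {y. (\<forall>j\<in>{1..n}. 0 \<le> y j \<and> y j < 2*pi) \<and> (\<forall>j. j \<notin> {1..n} \<longrightarrow> y j = 0)}"

definition ynode :: "nat \<Rightarrow> (nat \<Rightarrow> real) \<Rightarrow> nat \<Rightarrow> real" where
  "ynode n y j = (if j = 0 then 0 else if j = n + 1 then 2*pi else y j)"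

definition Fsum :: "nat \<Rightarrow> (nat \<Rightarrow> real \<Rightarrow> ereal) \<Rightarrow> (nat \<Rightarrow> real) \<Rightarrow> real \<Rightarrow> ereal" where
  "Fsum n K y t = K 0 t + (\<Sum>j\<in>{1..n}. K j (t - y j))"

text \<open>Open Ssigma S_sigma and its closure, for sigma a permutation of {1..n}
  (extended by sigma 0 = 0, sigma (n+1) = n+1, automatic for permutes).\<close>
definition Ssigma :: "nat \<Rightarrow> (nat \<Rightarrow> nat) \<Rightarrow> (nat \<Rightarrow> real) set" where
  "Ssigma n \<sigma> = {y \<in> torus_pts n. \<forall>k\<in>{0..n}. ynode n y (\<sigma> k) < ynode n y (\<sigma> (k+1))}"

definition Ssigma_cl :: "nat \<Rightarrow> (nat \<Rightarrow> nat) \<Rightarrow> (nat \<Rightarrow> real) set" where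
  "Ssigma_cl n \<sigma> = {y \<in> torus_pts n. \<forall>k\<in>{0..n}. ynode n y (\<sigma> k) \<le> ynode n y (\<sigma> (k+1))}"

definition interval_max :: "nat \<Rightarrow> (nat \<Rightarrow> real \<Rightarrow> ereal) \<Rightarrow> (nat \<Rightarrow> nat) \<Rightarrow> (nat \<Rightarrow> real) \<Rightarrow> nat \<Rightarrow> ereal" where
  "interval_max n K \<sigma> y k = (SUP t\<in>{ynode n y (\<sigma> k) .. ynode n y (\<sigma> (k+1))}. Fsum n K y t)"

definition equiosc_point :: "nat \<Rightarrow> (nat \<Rightarrow> real \<Rightarrow> ereal) \<Rightarrow> (nat \<Rightarrow> real) \<Rightarrow> bool" where
  "equiosc_point n K y \<longleftrightarrow> y \<in> torus_pts n \<and>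
     (\<exists>\<sigma>. \<sigma> permutes {1..n} \<and> y \<in> Ssigma_cl n \<sigma> \<and>
        (\<forall>k\<in>{0..n}. interval_max n K \<sigma> y k = interval_max n K \<sigma> y 0))"

end

theory Submission
  imports Defs "HOL-Library.Real_Mod"
begin

text \<open>Fix a permutation and list the nodes in increasing order, u 0 = 0 \<le> u 1 \<le> ... \<le>
  u (n + 1) = 2 pi. Every kernel is -\<infinity> at its own node, so a degenerate arc has maximum
  -\<infinity> while a nondegenerate one has a finite maximum: equioscillation forces all arcs to be
  nondegenerate, i.e. the point lies in the open simplex.

  Strict concavity of the kernels gives the one estimate everything rests on: if the nodes are
  moved to the right, the increment of F from the old to the new configuration strictly grows
  along the circle from a point before a moved node to a point after it. Consequently, moving
  node p + 1 between its neighbours, the position where the maxima on the two adjacent arcs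
  agree exists (intermediate value theorem for the continuous function exp \<circ> F), is unique,
  and depends monotonically on the other nodes. The greatest configuration lying below all its
  balance positions is a fixed point of every balancing step (as in Knaster-Tarski), hence
  equioscillates; every equioscillating configuration lies below it, and the same estimate shows
  that two ordered equioscillating configurations coincide.\<close>

lemma rmod_2pi_add_int: "(t + of_int m * (2*pi)) rmod (2*pi) = t rmod (2*pi)"
  by (metis rmod_add rmod_self_multiple_int add_0_right rmod_rmod)

lemma rmod_2pi_add: "(t + 2*pi) rmod (2*pi) = t rmod (2*pi)"
  using rmod_2pi_add_int[of t 1] by simp

lemma rmod_2pi_eq_0_iff:
  assumes "-2*pi < s" "s < 2*pi"
  shows "s rmod (2*pi) = 0 \<longleftrightarrow> s = 0"
proof (cases "0 \<le> s")
  case True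
  thus ?thesis using assms by simp
next
  case False
  hence "s rmod (2*pi) = s + 2*pi" using assms rmod_2pi_add[of s] by simp
  thus ?thesis using assms by auto
qed

lemma continuous_on_Sup_image:
  fixes H :: "'a::metric_space \<Rightarrow> 'b::metric_space \<Rightarrow> real"
  assumes A: "compact A" and S: "compact S" "S \<noteq> {}"
    and H: "continuous_on (A \<times> S) (\<lambda>z. H (fst z) (snd z))"
  shows "continuous_on A (\<lambda>a. Sup (H a ` S))"
  unfolding continuous_on_iff
proof (intro ballI allI impI)
  fix a0 and e :: real assume a0: "a0 \<in> A" and e: "0 < e"
  have bdd: "bdd_above (H a ` S)" if "a \<in> A" for a
  proof -
    have "continuous_on S (\<lambda>s. H (fst (a, s)) (snd (a, s)))"
      using that by (intro continuous_on_compose2[OF H] continuous_intros) auto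
    hence "compact (H a ` S)" using S by (intro compact_continuous_image) auto
    thus ?thesis by (intro bounded_imp_bdd_above compact_imp_bounded)
  qed
  have "uniformly_continuous_on (A \<times> S) (\<lambda>z. H (fst z) (snd z))"
    using A S H by (intro compact_uniformly_continuous compact_Times)
  then obtain d where d: "d > 0" and dd: "\<forall>z\<in>A \<times> S. \<forall>z'\<in>A \<times> S. dist z' z < d \<longrightarrow>
      dist (H (fst z') (snd z')) (H (fst z) (snd z)) < e/2"
    using e unfolding uniformly_continuous_on_def by (meson half_gt_zero)
  have Sup_le: "Sup (H b ` S) \<le> Sup (H c ` S) + e/2"
    if "c \<in> A" "\<And>s. s \<in> S \<Longrightarrow> \<bar>H b s - H c s\<bar> < e/2" for b c
  proof (rule cSUP_least[OF S(2)])
    fix s assume s: "s \<in> S"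
    have "H c s \<le> Sup (H c ` S)" using s bdd[OF that(1)] by (rule cSUP_upper)
    thus "H b s \<le> Sup (H c ` S) + e/2" using that(2)[OF s] unfolding abs_less_iff by linarith
  qed
  show "\<exists>d>0. \<forall>a\<in>A. dist a a0 < d \<longrightarrow> dist (Sup (H a ` S)) (Sup (H a0 ` S)) < e"
  proof (intro exI[of _ d] conjI ballI impI d)
    fix a assume a: "a \<in> A" and da: "dist a a0 < d"
    have close: "\<bar>H a s - H a0 s\<bar> < e/2" if "s \<in> S" for s
      using dd a a0 that da by (force simp: dist_Pair_Pair dist_real_def)
    have "Sup (H a ` S) \<le> Sup (H a0 ` S) + e/2" "Sup (H a0 ` S) \<le> Sup (H a ` S) + e/2"
      using Sup_le[OF a0 close] Sup_le[OF a, of a0] close by (auto simp: abs_minus_commute)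
    thus "dist (Sup (H a ` S)) (Sup (H a0 ` S)) < e" using e by (simp add: dist_real_def abs_le_iff)
  qed
qed

lemma continuous_on_Sup_Icc_param:
  fixes f :: "real \<Rightarrow> real \<Rightarrow> real"
  assumes f: "\<And>z. isCont (\<lambda>z. f (fst z) (snd z)) z" and A: "compact A"
    and \<alpha>: "continuous_on A \<alpha>" and \<beta>: "continuous_on A \<beta>" and le: "\<And>a. a \<in> A \<Longrightarrow> \<alpha> a \<le> \<beta> a"
  shows "continuous_on A (\<lambda>a. Sup (f a ` {\<alpha> a..\<beta> a}))"
proof -
  define H where "H a s = f a ((\<beta> a - \<alpha> a) * s + \<alpha> a)" for a s
  have "f a ` {\<alpha> a..\<beta> a} = H a ` {0..1}" if "a \<in> A" for a
  proof -
    have aff: "(\<lambda>s. (\<beta> a - \<alpha> a) * s + \<alpha> a) ` {0..1} = {\<alpha> a..\<beta> a}"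
      using le[OF that] by (subst image_affinity_atLeastAtMost) auto
    show ?thesis by (simp add: H_def image_image flip: aff)
  qed
  moreover have "continuous_on A (\<lambda>a. Sup (H a ` {0..1}))"
  proof (rule continuous_on_Sup_image[OF A compact_Icc])
    have "continuous_on (A \<times> {0..1}) (\<lambda>z. (fst z, (\<beta> (fst z) - \<alpha> (fst z)) * snd z + \<alpha> (fst z)))"
      by (intro continuous_intros continuous_on_compose2[OF \<alpha>] continuous_on_compose2[OF \<beta>]) auto
    moreover have "continuous_on UNIV (\<lambda>z. f (fst z) (snd z))"
      by (intro continuous_at_imp_continuous_on ballI f)
    ultimately show "continuous_on (A \<times> {0..1}) (\<lambda>z. H (fst z) (snd z))"
      using continuous_on_compose2[OF _ _ subset_UNIV] unfolding H_def by fastforce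
  qed simp
  ultimately show ?thesis by (simp cong: continuous_on_cong)
qed

text \<open>A node vector u lists the nodes of a point of a closed simplex in increasing order,
  kernel i being attached to node u i; for u i = ynode n y (\<sigma> i) and kernels K (\<sigma> i), F u
  is the function F(y, .) and arc_max u q is m_{\<sigma>(q)}(y). Only the values u 0, ..., u (n + 1)
  matter.\<close>
locale kernel_nodes =
  fixes n :: nat and K :: "nat \<Rightarrow> real \<Rightarrow> ereal"
begin

definition node_vecs :: "(nat \<Rightarrow> real) set" where
  "node_vecs = {u. u 0 = 0 \<and> u (Suc n) = 2*pi \<and> (\<forall>i\<le>n. u i \<le> u (Suc i))}"

definition F :: "(nat \<Rightarrow> real) \<Rightarrow> real \<Rightarrow> ereal" where
  "F u t = (\<Sum>i\<in>{0..n}. K i (t - u i))"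

definition off_nodes :: "(nat \<Rightarrow> real) \<Rightarrow> real \<Rightarrow> bool" where
  "off_nodes u t \<longleftrightarrow> (\<forall>i\<le>n. (t - u i) rmod (2*pi) \<noteq> 0)"

definition arc_max :: "(nat \<Rightarrow> real) \<Rightarrow> nat \<Rightarrow> ereal" where
  "arc_max u q = (SUP t\<in>{u q..u (Suc q)}. F u t)"

definition equioscillating :: "(nat \<Rightarrow> real) \<Rightarrow> bool" where
  "equioscillating u \<longleftrightarrow> u \<in> node_vecs \<and> (\<forall>q\<le>n. arc_max u q = arc_max u 0)"

lemma arc_max_upper: "t \<in> {u q..u (Suc q)} \<Longrightarrow> F u t \<le> arc_max u q"
  unfolding arc_max_def by (rule SUP_upper)

lemma equioscillatingD:
  assumes "equioscillating u"
  shows "u \<in> node_vecs" "q \<le> n \<Longrightarrow> arc_max u q = arc_max u 0"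
  using assms unfolding equioscillating_def by blast+

lemma equioscillating_cong:
  assumes "\<And>i. i \<le> Suc n \<Longrightarrow> u i = v i"
  shows "equioscillating u \<longleftrightarrow> equioscillating v"
proof -
  have "F u = F v" unfolding F_def using assms by (intro ext sum.cong) auto
  hence am: "arc_max u q = arc_max v q" if "q \<le> n" for q using assms that by (simp add: arc_max_def)
  hence "(\<forall>q\<le>n. arc_max u q = arc_max u 0) \<longleftrightarrow> (\<forall>q\<le>n. arc_max v q = arc_max v 0)" by simp
  moreover have "u \<in> node_vecs \<longleftrightarrow> v \<in> node_vecs" using assms by (simp add: node_vecs_def)
  ultimately show ?thesis unfolding equioscillating_def by (simp only:)
qed

lemma node_vecs_mono:
  assumes u: "u \<in> node_vecs" and "i \<le> j" "j \<le> Suc n"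
  shows "u i \<le> u j"
  using assms(2,3)
proof (induction j rule: dec_induct)
  case (step j)
  thus ?case using u by (force simp: node_vecs_def)
qed simp

lemma node_vecs_bounds: "u \<in> node_vecs \<Longrightarrow> i \<le> Suc n \<Longrightarrow> 0 \<le> u i \<and> u i \<le> 2*pi"
  using node_vecs_mono[of u 0 i] node_vecs_mono[of u i "Suc n"] by (auto simp: node_vecs_def)

lemma node_vecs_upd:
  assumes x: "x \<in> node_vecs" and p: "p < n" and a: "x p \<le> a" "a \<le> x (Suc (Suc p))"
  shows "x(Suc p := a) \<in> node_vecs"
  using x p a unfolding node_vecs_def by (auto simp: less_Suc_eq_le)

lemma node_vecs_cover:
  assumes u: "u \<in> node_vecs" and t: "0 \<le> t" "t \<le> 2*pi"
  obtains q where "q \<le> n" "u q \<le> t" "t \<le> u (Suc q)"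
proof -
  have "\<exists>q\<le>m. u q \<le> t \<and> t \<le> u (Suc q)" if "m \<le> n" "t \<le> u (Suc m)" for m
    using that
  proof (induction m)
    case 0 thus ?case using u t by (auto simp: node_vecs_def)
  next
    case (Suc m)
    thus ?case by (cases "t \<le> u (Suc m)") (auto intro: le_SucI)
  qed
  from this[of n] show ?thesis using that u t by (auto simp: node_vecs_def)
qed

lemma equioscillating_F_le:
  assumes u: "equioscillating u" and t: "0 \<le> t" "t \<le> 2*pi" and q: "q \<le> n"
  shows "F u t \<le> arc_max u q"
proof -
  obtain q' where q': "q' \<le> n" "u q' \<le> t" "t \<le> u (Suc q')"
    using node_vecs_cover[OF equioscillatingD(1)[OF u] t] by blast
  hence "F u t \<le> arc_max u q'" by (intro arc_max_upper) simp
  also have "\<dots> = arc_max u q" using equioscillatingD(2)[OF u q'(1)] equioscillatingD(2)[OF u q] by simp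
  finally show ?thesis .
qed

definition sup_nodes :: "(nat \<Rightarrow> real) set \<Rightarrow> nat \<Rightarrow> real" where
  "sup_nodes D i = (if i = 0 then 0 else if i = Suc n then 2*pi else Sup ((\<lambda>x. x i) ` D))"

lemma sup_nodes_upper:
  assumes D: "D \<subseteq> node_vecs" and x: "x \<in> D" and i: "i \<le> Suc n"
  shows "x i \<le> sup_nodes D i"
proof -
  have "bdd_above ((\<lambda>x. x i) ` D)"
    using node_vecs_bounds[OF _ i] D by (intro bdd_aboveI[of _ "2*pi"]) auto
  thus ?thesis using x D i by (auto simp: sup_nodes_def node_vecs_def intro: cSUP_upper)
qed

lemma sup_nodes_least:
  "D \<noteq> {} \<Longrightarrow> 0 < i \<Longrightarrow> i \<le> n \<Longrightarrow> (\<And>x. x \<in> D \<Longrightarrow> x i \<le> c) \<Longrightarrow> sup_nodes D i \<le> c"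
  by (auto simp: sup_nodes_def intro: cSUP_least)

lemma sup_nodes_node_vecs:
  assumes D: "D \<subseteq> node_vecs" "D \<noteq> {}"
  shows "sup_nodes D \<in> node_vecs"
  unfolding node_vecs_def
proof (intro CollectI conjI allI impI)
  show "sup_nodes D 0 = 0" "sup_nodes D (Suc n) = 2*pi" by (simp_all add: sup_nodes_def)
  fix i assume i: "i \<le> n"
  obtain x where x: "x \<in> D" using D(2) by blast
  show "sup_nodes D i \<le> sup_nodes D (Suc i)"
  proof (cases "i = 0")
    case True
    thus ?thesis using sup_nodes_upper[OF D(1) x, of 1] node_vecs_bounds[of x 1] x D(1) i
      by (auto simp: sup_nodes_def)
  next
    case False
    have "y i \<le> sup_nodes D (Suc i)" if "y \<in> D" for y
      using sup_nodes_upper[OF D(1) that, of "Suc i"] that D(1) i by (force simp: node_vecs_def)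
    thus ?thesis using sup_nodes_least[OF D(2)] False i by simp
  qed
qed

lemma node_vecs_nondegenerate_arc:
  assumes u: "u \<in> node_vecs"
  obtains q where "q \<le> n" "u q < u (Suc q)"
proof -
  have "\<not> (\<forall>q\<le>n. u (Suc q) \<le> u q)"
  proof
    assume "\<forall>q\<le>n. u (Suc q) \<le> u q"
    hence "(\<Sum>q = 0..n. u (Suc q) - u q) \<le> 0" by (intro sum_nonpos) auto
    thus False using u by (simp add: sum_Suc_diff node_vecs_def) (use pi_gt_zero in linarith)
  qed
  then obtain q where "q \<le> n" "\<not> u (Suc q) \<le> u q" by blast
  thus ?thesis using that by simp
qed

lemma off_nodes_inside_arc:
  assumes u: "u \<in> node_vecs" and q: "q \<le> n" and t: "u q < t" "t < u (Suc q)"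
  shows "off_nodes u t"
  unfolding off_nodes_def
proof (intro allI impI)
  fix i assume i: "i \<le> n"
  have "u i \<le> u q \<or> u (Suc q) \<le> u i"
    using node_vecs_mono[OF u, of i q] node_vecs_mono[OF u, of "Suc q" i] i q by linarith
  moreover have "-2*pi < t - u i" "t - u i < 2*pi"
    using node_vecs_bounds[OF u, of i] node_vecs_bounds[OF u, of q]
      node_vecs_bounds[OF u, of "Suc q"] i q t by auto
  ultimately show "(t - u i) rmod (2*pi) \<noteq> 0" using t rmod_2pi_eq_0_iff by force
qed

lemma not_off_nodes_node: "q \<le> n \<Longrightarrow> \<not> off_nodes u (u q)"
  by (auto simp: off_nodes_def)

lemma not_off_nodes_arc_end:
  assumes u: "u \<in> node_vecs" and q: "q \<le> n"
  shows "\<not> off_nodes u (u (Suc q))"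
proof (cases "q = n")
  case True
  have "(u (Suc n) - u 0) rmod (2*pi) = 0" using u by (simp add: node_vecs_def)
  thus ?thesis using True by (auto simp: off_nodes_def)
qed (use q not_off_nodes_node[of "Suc q" u] in simp)

end

locale concave_kernels = kernel_nodes n K
  for n :: nat and K :: "nat \<Rightarrow> real \<Rightarrow> ereal" +
  fixes k :: "nat \<Rightarrow> real \<Rightarrow> real"
  assumes periodic: "\<And>j t. j \<le> n \<Longrightarrow> K j (t + 2*pi) = K j t"
    and real_valued: "\<And>j t. j \<le> n \<Longrightarrow> t \<in> {0<..<2*pi} \<Longrightarrow> K j t = ereal (k j t)"
    and C2: "\<And>j. j \<le> n \<Longrightarrow> \<exists>k' k''. (\<forall>t\<in>{0<..<2*pi}.
               (k j has_real_derivative k' t) (at t) \<and> (k' has_real_derivative k'' t) (at t)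
               \<and> k'' t < 0) \<and> continuous_on {0<..<2*pi} k''"
    and at_zero: "\<And>j. j \<le> n \<Longrightarrow> K j 0 = -\<infinity>"
    and lim_right: "\<And>j. j \<le> n \<Longrightarrow> filterlim (k j) at_bot (at_right 0)"
    and lim_left: "\<And>j. j \<le> n \<Longrightarrow> filterlim (k j) at_bot (at_left (2*pi))"
begin

definition kp :: "nat \<Rightarrow> real \<Rightarrow> real" where
  "kp j t = k j (t rmod (2*pi))"

lemma kp_add_2pi: "kp j (t + 2*pi) = kp j t"
  by (simp add: kp_def rmod_2pi_add)

lemma kp_add_2pi_diff: "kp j (t + 2*pi - c) = kp j (t - c)"
  using kp_add_2pi[of j "t - c"] by (simp add: algebra_simps)

lemma kp_eq_k: "0 < t \<Longrightarrow> t < 2*pi \<Longrightarrow> kp j t = k j t"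
  by (simp add: kp_def)

lemma K_add_int: "j \<le> n \<Longrightarrow> K j (t + of_int m * (2*pi)) = K j t"
proof (induction m arbitrary: t rule: int_induct[where k = 0])
  case base
  thus ?case by simp
next
  case (step1 m)
  thus ?case using periodic[of j "t + of_int m * (2*pi)"] by (simp add: algebra_simps)
next
  case (step2 m)
  thus ?case using periodic[of j "t + of_int (m - 1) * (2*pi)"] by (simp add: algebra_simps)
qed

lemma K_rmod: "j \<le> n \<Longrightarrow> K j t = K j (t rmod (2*pi))"
  using K_add_int[of j t "- \<lfloor>t / (2*pi)\<rfloor>"] by (simp add: rmod_def algebra_simps)

lemma K_eq_kp: "j \<le> n \<Longrightarrow> K j t = (if t rmod (2*pi) = 0 then -\<infinity> else ereal (kp j t))"
  using K_rmod[of j t] at_zero[of j] real_valued[of j "t rmod (2*pi)"]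
    rmod_nonneg[of "2*pi" t] rmod_less[of "2*pi" t]
  by (auto simp: kp_def)

lemma k_has_derivatives:
  assumes "j \<le> n"
  obtains k' k'' where "\<And>t. t \<in> {0<..<2*pi} \<Longrightarrow> (k j has_real_derivative k' t) (at t)"
    and "\<And>t. t \<in> {0<..<2*pi} \<Longrightarrow> (k' has_real_derivative k'' t) (at t)"
    and "\<And>t. t \<in> {0<..<2*pi} \<Longrightarrow> k'' t < 0"
  using C2[OF assms] by blast

lemma k_increment_strict_antimono:
  assumes j: "j \<le> n" and "0 < u" "u < v" "0 < h" "v + h < 2*pi"
  shows "k j (v + h) - k j v < k j (u + h) - k j u"
proof -
  obtain k' k'' where d1: "\<And>t. t \<in> {0<..<2*pi} \<Longrightarrow> (k j has_real_derivative k' t) (at t)"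
    and d2: "\<And>t. t \<in> {0<..<2*pi} \<Longrightarrow> (k' has_real_derivative k'' t) (at t)"
    and neg: "\<And>t. t \<in> {0<..<2*pi} \<Longrightarrow> k'' t < 0"
    using k_has_derivatives[OF j] by blast
  have k'_decr: "k' b < k' a" if "0 < a" "a < b" "b < 2*pi" for a b
  proof (rule DERIV_neg_imp_decreasing[OF \<open>a < b\<close>])
    fix x assume "a \<le> x" "x \<le> b"
    hence "x \<in> {0<..<2*pi}" using that by auto
    thus "\<exists>y. (k' has_real_derivative y) (at x) \<and> y < 0" using d2 neg by blast
  qed
  have "(\<lambda>s. k j (s + h) - k j s) v < (\<lambda>s. k j (s + h) - k j s) u"
  proof (rule DERIV_neg_imp_decreasing[OF \<open>u < v\<close>])
    fix x assume x: "u \<le> x" "x \<le> v"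
    have "((\<lambda>s. k j (s + h)) has_real_derivative k' (x + h)) (at x)"
      using DERIV_shift[of "k j" "k' (x + h)" x h] d1[of "x + h"] x assms by simp
    hence "((\<lambda>s. k j (s + h) - k j s) has_real_derivative k' (x + h) - k' x) (at x)"
      using d1[of x] x assms by (intro DERIV_diff) auto
    moreover have "k' (x + h) < k' x" using k'_decr[of x "x + h"] x assms by simp
    ultimately show "\<exists>y. ((\<lambda>s. k j (s + h) - k j s) has_real_derivative y) (at x) \<and> y < 0"
      by (intro exI[of _ "k' (x + h) - k' x"]) simp
  qed
  thus ?thesis by simp
qed

lemma kp_gain_strict_mono:
  assumes j: "j \<le> n" and "a < b" "b < t" "t < t'" "t' < a + 2*pi"
  shows "kp j (t - b) - kp j (t - a) < kp j (t' - b) - kp j (t' - a)"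
proof -
  have "k j ((t - a) + (t' - t)) - k j (t - a) < k j ((t - b) + (t' - t)) - k j (t - b)"
    by (rule k_increment_strict_antimono[OF j]) (use assms in auto)
  thus ?thesis using assms by (simp add: kp_eq_k algebra_simps)
qed

lemma kp_gain_mono:
  assumes j: "j \<le> n" and "a \<le> b" "b < t" "t < t'" "t' < a + 2*pi"
  shows "kp j (t - b) - kp j (t - a) \<le> kp j (t' - b) - kp j (t' - a)"
  using kp_gain_strict_mono[OF j, of a b t t'] assms by (cases "a = b") auto

text \<open>exp \<circ> K j, made continuous by the value 0 at the singularity; maxima of F are located
  and compared through these continuous functions.\<close>
definition expk :: "nat \<Rightarrow> real \<Rightarrow> real" where
  "expk j t = (if t rmod (2*pi) = 0 then 0 else exp (kp j t))"

lemma expk_add_int: "expk j (t + of_int m * (2*pi)) = expk j t"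
  by (simp add: expk_def kp_def rmod_2pi_add_int)

lemma isCont_expk_inside:
  assumes j: "j \<le> n" and t: "0 < t" "t < 2*pi"
  shows "isCont (expk j) t"
proof -
  obtain k' where "(k j has_real_derivative k' t) (at t)"
    using k_has_derivatives[OF j] t by (metis greaterThanLessThan_iff)
  hence "isCont (\<lambda>s. exp (k j s)) t" by (intro isCont_exp' DERIV_isCont)
  moreover have "\<forall>\<^sub>F s in nhds t. expk j s = exp (k j s)"
    using eventually_nhds_in_open[of "{0<..<2*pi}" t] t
    by (auto elim!: eventually_mono simp: expk_def kp_def)
  ultimately show ?thesis using isCont_cong by force
qed

lemma isCont_expk_0:
  assumes j: "j \<le> n"
  shows "isCont (expk j) 0"
proof -
  have "((\<lambda>s. exp (k j s)) \<longlongrightarrow> 0) (at_right 0)"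
    using filterlim_compose[OF exp_at_bot lim_right[OF j]] by (simp add: o_def)
  moreover have "\<forall>\<^sub>F s in at_right 0. exp (k j s) = expk j s"
    using eventually_at_right_real[of 0 "2*pi"] by (auto elim!: eventually_mono simp: expk_def kp_def)
  ultimately have right: "(expk j \<longlongrightarrow> 0) (at_right 0)" by (rule Lim_transform_eventually)
  have "filterlim (\<lambda>s. s + 2*pi) (at_left (2*pi)) (at_left (0::real))"
  proof (rule filterlim_at_withinI)
    show "((\<lambda>s. s + 2*pi) \<longlongrightarrow> 2*pi) (at_left (0::real))"
      by (auto intro!: tendsto_eq_intros)
    show "\<forall>\<^sub>F s in at_left 0. s + 2*pi \<in> {..<2*pi} - {2*pi}"
      using eventually_at_left_real[of "-1" "0::real"] by (auto elim!: eventually_mono)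
  qed
  hence "((\<lambda>s. exp (k j (s + 2*pi))) \<longlongrightarrow> 0) (at_left 0)"
    using filterlim_compose[OF exp_at_bot filterlim_compose[OF lim_left[OF j]]] by blast
  moreover have "\<forall>\<^sub>F s in at_left 0. exp (k j (s + 2*pi)) = expk j s"
  proof (rule eventually_mono[OF eventually_at_left_real[of "-2*pi" 0]])
    fix s :: real assume "s \<in> {-2*pi<..<0}"
    hence "expk j (s + 2*pi) = exp (k j (s + 2*pi))" by (simp add: expk_def kp_def)
    thus "exp (k j (s + 2*pi)) = expk j s" using expk_add_int[of j s 1] by simp
  qed simp
  ultimately have left: "(expk j \<longlongrightarrow> 0) (at_left 0)" by (rule Lim_transform_eventually)
  have "expk j 0 = 0" by (simp add: expk_def)
  thus ?thesis using filterlim_split_at_real[OF left right] by (simp add: isCont_def)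
qed

lemma isCont_expk:
  assumes j: "j \<le> n"
  shows "isCont (expk j) t"
proof -
  define c where "c = of_int (- \<lfloor>t / (2*pi)\<rfloor>) * (2*pi)"
  have tc: "t + c = t rmod (2*pi)" by (simp add: rmod_def c_def)
  have "isCont (expk j) (t + c)"
    using isCont_expk_0[OF j] isCont_expk_inside[OF j, of "t + c"] tc
      rmod_nonneg[of "2*pi" t] rmod_less[of "2*pi" t]
    by (cases "t + c = 0") auto
  moreover have "isCont (\<lambda>s. s + c) t" by (intro continuous_intros)
  ultimately have "isCont (\<lambda>s. expk j (s + c)) t" using isCont_o2 by blast
  moreover have "(\<lambda>s. expk j (s + c)) = expk j" unfolding c_def by (rule ext, rule expk_add_int)
  ultimately show ?thesis by simp
qed

definition F_real :: "(nat \<Rightarrow> real) \<Rightarrow> real \<Rightarrow> real" where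
  "F_real u t = (\<Sum>i\<in>{0..n}. kp i (t - u i))"

definition expF :: "(nat \<Rightarrow> real) \<Rightarrow> real \<Rightarrow> real" where
  "expF u t = (\<Prod>i\<in>{0..n}. expk i (t - u i))"

lemma F_off_nodes: "off_nodes u t \<Longrightarrow> F u t = ereal (F_real u t)"
  unfolding F_def F_real_def off_nodes_def by (simp add: K_eq_kp)

lemma F_at_node:
  assumes "\<not> off_nodes u t"
  shows "F u t = -\<infinity>"
proof -
  obtain i where i: "i \<le> n" "(t - u i) rmod (2*pi) = 0" using assms by (auto simp: off_nodes_def)
  have "F u t \<noteq> \<infinity>" unfolding F_def sum_Pinfty by (auto simp: K_eq_kp)
  moreover have "\<bar>F u t\<bar> = \<infinity>" unfolding F_def sum_Inf using i by (auto simp: K_eq_kp)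
  ultimately show ?thesis by auto
qed

lemma expF_off_nodes: "off_nodes u t \<Longrightarrow> expF u t = exp (F_real u t)"
  unfolding expF_def F_real_def off_nodes_def by (simp add: expk_def exp_sum)

lemma expF_at_node:
  assumes "\<not> off_nodes u t"
  shows "expF u t = 0"
proof -
  obtain i where "i \<le> n" "(t - u i) rmod (2*pi) = 0" using assms by (auto simp: off_nodes_def)
  thus ?thesis unfolding expF_def by (intro prod_zero) (auto simp: expk_def)
qed

lemma expF_pos_iff: "0 < expF u t \<longleftrightarrow> off_nodes u t"
  by (cases "off_nodes u t") (simp_all add: expF_off_nodes expF_at_node)

lemma isCont_expF_param:
  assumes "\<And>i. i \<le> n \<Longrightarrow> isCont (\<lambda>z. u z i) a" and "isCont g a"
  shows "isCont (\<lambda>z. expF (u z) (g z)) a"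
  unfolding expF_def using assms
  by (intro continuous_prod isCont_o2[OF _ isCont_expk] continuous_intros) auto

lemma isCont_expF: "isCont (expF u) t"
  using isCont_expF_param[where u = "\<lambda>_. u" and g = "\<lambda>z. z" and a = t] by simp

lemma F_le_of_expF_le:
  assumes z: "off_nodes u z" and le: "expF u t \<le> expF u z"
  shows "F u t \<le> F u z"
proof (cases "off_nodes u t")
  case True
  thus ?thesis using z le by (simp add: F_off_nodes expF_off_nodes)
qed (simp add: F_at_node)

definition arc_max_exp :: "(nat \<Rightarrow> real) \<Rightarrow> nat \<Rightarrow> real" where
  "arc_max_exp u q = Sup (expF u ` {u q..u (Suc q)})"

lemma arc_maximizer:
  assumes u: "u \<in> node_vecs" and q: "q \<le> n" and lt: "u q < u (Suc q)"
  obtains z where "u q < z" "z < u (Suc q)" "off_nodes u z"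
    "arc_max u q = ereal (F_real u z)" "arc_max_exp u q = exp (F_real u z)"
proof -
  obtain z where z: "z \<in> {u q..u (Suc q)}" and zmax: "\<forall>t\<in>{u q..u (Suc q)}. expF u t \<le> expF u z"
    using continuous_attains_sup[of "{u q..u (Suc q)}" "expF u"] lt
      continuous_at_imp_continuous_on[OF ballI[OF isCont_expF]] by auto
  define mid where "mid = (u q + u (Suc q)) / 2"
  have "0 < expF u mid" using off_nodes_inside_arc[OF u q] lt by (simp add: expF_pos_iff mid_def)
  also have "\<dots> \<le> expF u z" using zmax lt by (simp add: mid_def)
  finally have off: "off_nodes u z" by (simp add: expF_pos_iff)
  have "arc_max u q = F u z"
    unfolding arc_max_def using z zmax off F_le_of_expF_le by (intro antisym SUP_least SUP_upper) auto
  moreover have "arc_max_exp u q = expF u z"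
    unfolding arc_max_exp_def using z zmax by (intro cSup_eq_maximum) auto
  moreover have "z \<noteq> u q" "z \<noteq> u (Suc q)"
    using off not_off_nodes_node[OF q] not_off_nodes_arc_end[OF u q] by auto
  ultimately show ?thesis using z off by (intro that[of z]) (auto simp: F_off_nodes expF_off_nodes)
qed

lemma arc_max_degenerate:
  assumes "q \<le> n" "u q = u (Suc q)"
  shows "arc_max u q = -\<infinity>"
  unfolding arc_max_def assms(2)[symmetric] using F_at_node not_off_nodes_node[OF assms(1)] by simp

lemma arc_max_finite:
  assumes "u \<in> node_vecs" "q \<le> n" "u q < u (Suc q)"
  shows "arc_max u q \<noteq> -\<infinity>"
proof -
  obtain z where "arc_max u q = ereal (F_real u z)" using arc_maximizer[OF assms] by blast
  thus ?thesis by simp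
qed

lemma arc_max_exp_degenerate:
  assumes "q \<le> n" "u q = u (Suc q)"
  shows "arc_max_exp u q = 0"
  unfolding arc_max_exp_def assms(2)[symmetric] using expF_at_node[OF not_off_nodes_node[OF assms(1)]]
  by simp

lemma arc_max_exp_pos: "u \<in> node_vecs \<Longrightarrow> q \<le> n \<Longrightarrow> u q < u (Suc q) \<Longrightarrow> 0 < arc_max_exp u q"
  by (metis arc_maximizer exp_gt_zero)

lemma arc_max_eq_iff_exp:
  assumes u: "u \<in> node_vecs" and q: "q \<le> n" "u q < u (Suc q)" and q': "q' \<le> n" "u q' < u (Suc q')"
  shows "arc_max u q = arc_max u q' \<longleftrightarrow> arc_max_exp u q = arc_max_exp u q'"
proof -
  obtain z where "arc_max u q = ereal (F_real u z)" "arc_max_exp u q = exp (F_real u z)"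
    using arc_maximizer[OF u q] by metis
  moreover obtain z' where "arc_max u q' = ereal (F_real u z')" "arc_max_exp u q' = exp (F_real u z')"
    using arc_maximizer[OF u q'] by metis
  ultimately show ?thesis by simp
qed

lemma F_real_gain_strict:
  assumes le: "\<And>i. i \<le> n \<Longrightarrow>
      kp i (z' - y' i) - kp i (z' - y i) \<le> kp i (z - y' i) - kp i (z - y i)"
    and lt: "i0 \<le> n" "kp i0 (z' - y' i0) - kp i0 (z' - y i0) < kp i0 (z - y' i0) - kp i0 (z - y i0)"
  shows "F_real y' z' - F_real y z' < F_real y' z - F_real y z"
proof -
  have "(\<Sum>i\<in>{0..n}. kp i (z' - y' i) - kp i (z' - y i)) < (\<Sum>i\<in>{0..n}. kp i (z - y' i) - kp i (z - y i))"
    using le lt by (intro sum_strict_mono_ex1) auto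
  thus ?thesis by (simp add: F_real_def sum_subtractf)
qed

definition balances :: "(nat \<Rightarrow> real) \<Rightarrow> nat \<Rightarrow> real \<Rightarrow> bool" where
  "balances x p a \<longleftrightarrow> x p < a \<and> a < x (Suc (Suc p)) \<and>
     arc_max (x(Suc p := a)) p = arc_max (x(Suc p := a)) (Suc p)"

lemma F_real_gain_moved_node:
  assumes x: "x \<in> node_vecs" and x': "x' \<in> node_vecs" and p: "p < n"
    and le: "\<And>j. j \<le> Suc n \<Longrightarrow> j \<noteq> Suc p \<Longrightarrow> x j \<le> x' j" and ba: "b < a"
    and z': "x' p < z'" "z' < b" and z: "a < z" "z < x (Suc (Suc p))"
  defines "y \<equiv> x(Suc p := a)" and "y' \<equiv> x'(Suc p := b)"
  shows "F_real y' z' - F_real y z' < F_real y' z - F_real y z"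
proof -
  have z_lt: "z < 2*pi" and z'_pos: "0 < z'"
    using z(2) z'(1) node_vecs_bounds[OF x, of "Suc (Suc p)"] node_vecs_bounds[OF x', of p] p by auto
  have gain: "kp i (z' - y' i) - kp i (z' - y i) \<le> kp i (z - y' i) - kp i (z - y i)"
    if i: "i \<le> n" "i \<noteq> Suc p" for i
  proof -
    have yi: "y i = x i" "y' i = x' i" "x i \<le> x' i" using i le by (auto simp: y_def y'_def)
    have bi: "0 \<le> x i" "x' i \<le> 2*pi" using node_vecs_bounds[OF x, of i] node_vecs_bounds[OF x', of i] i by auto
    show ?thesis
    proof (cases "i \<le> p")
      case True
      hence "x' i \<le> x' p" using node_vecs_mono[OF x'] p by simp
      thus ?thesis using i yi bi z z' z_lt ba by (intro kp_gain_mono) auto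
    next
      case False
      hence "x (Suc (Suc p)) \<le> x i" using node_vecs_mono[OF x] i by simp
      hence "kp i (z' + 2*pi - x' i) - kp i (z' + 2*pi - x i) \<le> kp i (z + 2*pi - x' i) - kp i (z + 2*pi - x i)"
        using i yi bi z z' z'_pos ba by (intro kp_gain_mono) auto
      thus ?thesis using yi by (simp add: kp_add_2pi_diff)
    qed
  qed
  have "kp (Suc p) (z - a) - kp (Suc p) (z - b) < kp (Suc p) (z' + 2*pi - a) - kp (Suc p) (z' + 2*pi - b)"
    using p ba z z' z_lt z'_pos by (intro kp_gain_strict_mono) auto
  hence strict: "kp (Suc p) (z' - y' (Suc p)) - kp (Suc p) (z' - y (Suc p))
      < kp (Suc p) (z - y' (Suc p)) - kp (Suc p) (z - y (Suc p))"
    by (simp add: kp_add_2pi_diff y_def y'_def)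
  have "kp i (z' - y' i) - kp i (z' - y i) \<le> kp i (z - y' i) - kp i (z - y i)" if "i \<le> n" for i
    using gain[OF that] strict by (cases "i = Suc p") auto
  from F_real_gain_strict[OF this _ strict] show ?thesis using p by simp
qed

lemma balances_mono:
  assumes x: "x \<in> node_vecs" and x': "x' \<in> node_vecs" and p: "p < n"
    and le: "\<And>j. j \<le> Suc n \<Longrightarrow> j \<noteq> Suc p \<Longrightarrow> x j \<le> x' j"
    and a: "balances x p a" and b: "balances x' p b"
  shows "a \<le> b"
proof (rule ccontr)
  assume "\<not> a \<le> b"
  hence ba: "b < a" by simp
  define y where "y = x(Suc p := a)"
  define y' where "y' = x'(Suc p := b)"
  have pn: "p \<le> n" "Suc p \<le> n" using p by auto
  have y: "y \<in> node_vecs" "y' \<in> node_vecs"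
    using node_vecs_upd[OF x p] node_vecs_upd[OF x' p] a b by (auto simp: y_def y'_def balances_def)
  have xx': "x p \<le> x' p" "x (Suc (Suc p)) \<le> x' (Suc (Suc p))" using le p by auto
  obtain z where z: "a < z" "z < x (Suc (Suc p))" "arc_max y (Suc p) = ereal (F_real y z)"
    using arc_maximizer[OF y(1) pn(2)] a by (auto simp: y_def balances_def)
  obtain z' where z': "x' p < z'" "z' < b" "arc_max y' p = ereal (F_real y' z')"
    using arc_maximizer[OF y(2) pn(1)] b by (auto simp: y'_def balances_def)
  have "ereal (F_real y' z) = F y' z"
    using off_nodes_inside_arc[OF y(2) pn(2)] z ba xx' by (simp add: y'_def F_off_nodes)
  also have "\<dots> \<le> arc_max y' (Suc p)"
    using z ba xx' by (intro arc_max_upper) (simp add: y'_def)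
  also have "\<dots> = ereal (F_real y' z')" using b z' by (simp add: y'_def balances_def)
  finally have r': "F_real y' z \<le> F_real y' z'" by simp
  have "ereal (F_real y z') = F y z'"
    using off_nodes_inside_arc[OF y(1) pn(1)] z' ba xx' by (simp add: y_def F_off_nodes)
  also have "\<dots> \<le> arc_max y p"
    using z' ba xx' by (intro arc_max_upper) (simp add: y_def)
  also have "\<dots> = ereal (F_real y z)" using a z by (simp add: y_def balances_def)
  finally have r: "F_real y z' \<le> F_real y z" by simp
  show False
    using F_real_gain_moved_node[OF x x' p le ba z'(1,2) z(1,2)] r r' by (simp add: y_def y'_def)
qed

lemma balances_exists:
  assumes x: "x \<in> node_vecs" and p: "p < n" and lt: "x p < x (Suc (Suc p))"
  obtains a where "balances x p a"
proof -
  define lo where "lo = x p"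
  define hi where "hi = x (Suc (Suc p))"
  define y where "y a = x(Suc p := a)" for a
  define h where "h a = arc_max_exp (y a) (Suc p) - arc_max_exp (y a) p" for a
  have pn: "p \<le> n" "Suc p \<le> n" using p by auto
  have yv: "y a p = lo" "y a (Suc p) = a" "y a (Suc (Suc p)) = hi" for a
    by (auto simp: y_def lo_def hi_def)
  have y: "y a \<in> node_vecs" if "a \<in> {lo..hi}" for a
    using node_vecs_upd[OF x p] that by (simp add: y_def lo_def hi_def)
  have f: "isCont (\<lambda>z. expF (x(Suc p := fst z)) (snd z)) z" for z :: "real \<times> real"
  proof (intro isCont_expF_param)
    show "isCont (\<lambda>z. (x(Suc p := fst z)) i) z" for i
      by (cases "i = Suc p") (auto intro: continuous_intros)
  qed (intro continuous_intros)
  have "continuous_on {lo..hi} (\<lambda>a. Sup (expF (x(Suc p := a)) ` {a..hi}))"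
    "continuous_on {lo..hi} (\<lambda>a. Sup (expF (x(Suc p := a)) ` {lo..a}))"
    by (intro continuous_on_Sup_Icc_param[OF f compact_Icc] continuous_intros; simp)+
  hence cont: "continuous_on {lo..hi} h"
    unfolding h_def arc_max_exp_def yv by (simp add: y_def continuous_on_diff)
  have "0 < h lo"
    using arc_max_exp_pos[OF y pn(2)] arc_max_exp_degenerate[OF pn(1)] lt yv
    by (simp add: h_def lo_def hi_def)
  moreover have "h hi < 0"
    using arc_max_exp_pos[OF y pn(1)] arc_max_exp_degenerate[OF pn(2)] lt yv
    by (simp add: h_def lo_def hi_def)
  ultimately obtain a where a: "lo < a" "a < hi" "h a = 0"
    using IVT2'[of h hi 0 lo, OF _ _ _ cont] lt
    by (metis order.strict_iff_order lo_def hi_def less_irrefl)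
  moreover have "y a \<in> node_vecs" using y a by simp
  ultimately have "arc_max (y a) p = arc_max (y a) (Suc p)"
    using arc_max_eq_iff_exp[of "y a" p "Suc p"] pn yv by (simp add: h_def)
  thus ?thesis using a that by (simp add: balances_def y_def lo_def hi_def)
qed

lemma balances_unique:
  assumes "x \<in> node_vecs" "p < n" "balances x p a" "balances x p b"
  shows "a = b"
  using balances_mono[of x x p a b] balances_mono[of x x p b a] assms by force

text \<open>When the two neighbours of node p + 1 coincide there is nothing to balance; the value
  x p is chosen so that balance stays monotone.\<close>
definition balance :: "(nat \<Rightarrow> real) \<Rightarrow> nat \<Rightarrow> real" where
  "balance x p = (if x p < x (Suc (Suc p)) then THE a. balances x p a else x p)"

lemma balances_balance:
  assumes "x \<in> node_vecs" "p < n" "x p < x (Suc (Suc p))"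
  shows "balances x p (balance x p)"
proof -
  obtain a where "balances x p a" using balances_exists[OF assms] .
  hence "\<exists>!a. balances x p a" using balances_unique[OF assms(1,2)] by blast
  thus ?thesis using assms(3) by (simp add: balance_def theI')
qed

lemma balance_eqI: "x \<in> node_vecs \<Longrightarrow> p < n \<Longrightarrow> balances x p a \<Longrightarrow> balance x p = a"
  using balances_balance balances_unique by (fastforce simp: balances_def)

lemma balance_bounds:
  assumes x: "x \<in> node_vecs" and p: "p < n"
  shows "x p \<le> balance x p" "balance x p \<le> x (Suc (Suc p))"
  using balances_balance[OF x p] node_vecs_mono[OF x, of p "Suc (Suc p)"] p
  by (cases "x p < x (Suc (Suc p))"; force simp: balances_def balance_def)+

lemma balance_fun_upd: "balance (x(Suc p := v)) p = balance x p"
proof -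
  have "balances (x(Suc p := v)) p = balances x p" by (rule ext) (simp add: balances_def)
  thus ?thesis by (simp add: balance_def)
qed

lemma balance_mono:
  assumes x: "x \<in> node_vecs" and x': "x' \<in> node_vecs" and p: "p < n"
    and le: "\<And>j. j \<le> Suc n \<Longrightarrow> j \<noteq> Suc p \<Longrightarrow> x j \<le> x' j"
  shows "balance x p \<le> balance x' p"
proof (cases "x p < x (Suc (Suc p)) \<and> x' p < x' (Suc (Suc p))")
  case True
  thus ?thesis by (intro balances_mono[OF x x' p le] balances_balance[OF x p] balances_balance[OF x' p]) auto
next
  case False
  have "x p \<le> x' p" "x (Suc (Suc p)) \<le> x' (Suc (Suc p))" using le p by auto
  moreover have "x p \<le> x (Suc (Suc p))" "x' p \<le> x' (Suc (Suc p))"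
    using node_vecs_mono[OF x] node_vecs_mono[OF x'] p by auto
  ultimately consider "\<not> x p < x (Suc (Suc p))" | "\<not> x' p < x' (Suc (Suc p))" using False by blast
  thus ?thesis
  proof cases
    case 1
    hence "balance x p = x p" by (simp add: balance_def)
    thus ?thesis using \<open>x p \<le> x' p\<close> balance_bounds[OF x' p] by linarith
  next
    case 2
    hence "balance x' p = x' (Suc (Suc p))" using \<open>x' p \<le> x' (Suc (Suc p))\<close> by (simp add: balance_def)
    thus ?thesis using \<open>x (Suc (Suc p)) \<le> x' (Suc (Suc p))\<close> balance_bounds[OF x p] by linarith
  qed
qed

lemma equioscillating_strict:
  assumes u: "equioscillating u" and q: "q \<le> n"
  shows "u q < u (Suc q)"
proof -
  note uN = equioscillatingD[OF u]
  obtain q' where q': "q' \<le> n" "u q' < u (Suc q')"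
    using node_vecs_nondegenerate_arc[OF uN(1)] by blast
  have "arc_max u q \<noteq> -\<infinity>"
    using uN(2)[OF q] uN(2)[OF q'(1)] arc_max_finite[OF uN(1) q'] by simp
  hence "u q \<noteq> u (Suc q)" using arc_max_degenerate[OF q] by blast
  thus ?thesis using node_vecs_mono[OF uN(1), of q "Suc q"] q by simp
qed

text \<open>The same estimate with all nodes except node 0 raised: no node lies strictly between
  zn and z0 + 2 pi.\<close>
lemma F_real_gain_wrapping:
  assumes x: "x \<in> node_vecs" and x': "x' \<in> node_vecs" and le: "\<And>j. j \<le> n \<Longrightarrow> x j \<le> x' j"
    and z0: "0 < z0" "z0 < x 1" and zn: "x' n < zn" "zn < 2*pi" and i: "i \<le> n" "x i \<noteq> x' i"
  shows "F_real x' zn - F_real x zn < F_real x' z0 - F_real x z0"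
proof -
  have ends: "x 0 = 0" "x' 0 = 0" using x x' by (auto simp: node_vecs_def)
  have arcs: "x' j < zn" "zn < z0 + 2*pi" "z0 + 2*pi < x j + 2*pi" if "0 < j" "j \<le> n" for j
    using that zn z0 node_vecs_mono[OF x', of j n] node_vecs_mono[OF x, of 1 j] by auto
  have gain: "kp j (zn - x' j) - kp j (zn - x j) \<le> kp j (z0 - x' j) - kp j (z0 - x j)" if "j \<le> n" for j
  proof (cases "j = 0")
    case False
    hence "kp j (zn - x' j) - kp j (zn - x j) \<le> kp j (z0 + 2*pi - x' j) - kp j (z0 + 2*pi - x j)"
      using that le arcs by (intro kp_gain_mono) auto
    thus ?thesis by (simp add: kp_add_2pi_diff)
  qed (simp add: ends)
  have "0 < i" "x i < x' i" using i ends le[OF i(1)] by (auto intro: Nat.gr0I)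
  hence "kp i (zn - x' i) - kp i (zn - x i) < kp i (z0 + 2*pi - x' i) - kp i (z0 + 2*pi - x i)"
    using i arcs by (intro kp_gain_strict_mono) auto
  hence "kp i (zn - x' i) - kp i (zn - x i) < kp i (z0 - x' i) - kp i (z0 - x i)"
    by (simp add: kp_add_2pi_diff)
  from F_real_gain_strict[OF gain i(1) this] show ?thesis .
qed

lemma equioscillating_unique_of_le:
  assumes x: "equioscillating x" and x': "equioscillating x'"
    and le: "\<And>j. j \<le> n \<Longrightarrow> x j \<le> x' j" and i: "i \<le> n"
  shows "x i = x' i"
proof (rule ccontr)
  assume ne: "x i \<noteq> x' i"
  note X = equioscillatingD[OF x] and X' = equioscillatingD[OF x']
  have ends: "x 0 = 0" "x' 0 = 0" "x (Suc n) = 2*pi" "x' (Suc n) = 2*pi"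
    using X(1) X'(1) by (auto simp: node_vecs_def)
  obtain z0 where z0: "0 < z0" "z0 < x 1" "arc_max x 0 = ereal (F_real x z0)"
    using arc_maximizer[OF X(1) le0 equioscillating_strict[OF x le0]] ends by auto
  obtain zn where zn: "x' n < zn" "zn < 2*pi" "arc_max x' n = ereal (F_real x' zn)"
    using arc_maximizer[OF X'(1) order_refl equioscillating_strict[OF x' order_refl]] ends by auto
  have "x 1 \<le> x' 1" using le[of 1] ends by (cases n) auto
  hence "ereal (F_real x' z0) = F x' z0"
    using off_nodes_inside_arc[OF X'(1) le0, of z0] z0 ends by (simp add: F_off_nodes)
  also have "\<dots> \<le> arc_max x' n"
    using z0 node_vecs_bounds[OF X(1), of 1] by (intro equioscillating_F_le[OF x']) auto
  finally have r': "F_real x' z0 \<le> F_real x' zn" using zn(3) by simp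
  have "ereal (F_real x zn) = F x zn"
    using off_nodes_inside_arc[OF X(1) order_refl, of zn] zn ends le[of n] by (simp add: F_off_nodes)
  also have "\<dots> \<le> arc_max x 0"
    using zn node_vecs_bounds[OF X'(1), of n] by (intro equioscillating_F_le[OF x]) auto
  finally have r: "F_real x zn \<le> F_real x z0" using z0(3) by simp
  show False using F_real_gain_wrapping[OF X(1) X'(1) le z0(1,2) zn(1,2) i ne] r r' by simp
qed

definition subbalanced :: "(nat \<Rightarrow> real) \<Rightarrow> bool" where
  "subbalanced x \<longleftrightarrow> x \<in> node_vecs \<and> (\<forall>p<n. x (Suc p) \<le> balance x p)"

lemma equioscillating_subbalanced:
  assumes v: "equioscillating v"
  shows "subbalanced v"
  unfolding subbalanced_def
proof (intro conjI allI impI)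
  note V = equioscillatingD[OF v]
  show "v \<in> node_vecs" by (rule V(1))
  fix p assume p: "p < n"
  have "balances v p (v (Suc p))"
    using equioscillating_strict[OF v, of p] equioscillating_strict[OF v, of "Suc p"] p
      V(2)[of p] V(2)[of "Suc p"] by (simp add: balances_def)
  thus "v (Suc p) \<le> balance v p" using balance_eqI[OF V(1) p] by simp
qed

lemma greatest_subbalanced:
  obtains u where "subbalanced u" "\<And>x i. subbalanced x \<Longrightarrow> i \<le> Suc n \<Longrightarrow> x i \<le> u i"
proof -
  define D where "D = Collect subbalanced"
  define u where "u = sup_nodes D"
  have DQ: "D \<subseteq> node_vecs" by (auto simp: D_def subbalanced_def)
  define x0 :: "nat \<Rightarrow> real" where "x0 i = (if i = Suc n then 2*pi else 0)" for i
  have x0: "x0 \<in> node_vecs" by (simp add: node_vecs_def x0_def)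
  hence "x0 \<in> D" using balance_bounds(1)[OF x0] by (simp add: D_def subbalanced_def x0_def)
  hence D: "D \<noteq> {}" by blast
  have u: "u \<in> node_vecs" unfolding u_def by (rule sup_nodes_node_vecs[OF DQ D])
  have le_u: "x i \<le> u i" if "x \<in> D" "i \<le> Suc n" for x i
    unfolding u_def by (rule sup_nodes_upper[OF DQ that])
  have "subbalanced u" unfolding subbalanced_def
  proof (intro conjI allI impI u)
    fix p assume p: "p < n"
    show "u (Suc p) \<le> balance u p" unfolding u_def
    proof (rule sup_nodes_least[OF D])
      fix x assume x: "x \<in> D"
      have "x (Suc p) \<le> balance x p" using x p by (simp add: D_def subbalanced_def)
      also have "\<dots> \<le> balance u p" using le_u[OF x] DQ x by (intro balance_mono[OF _ u p]) auto
      finally show "x (Suc p) \<le> balance (sup_nodes D) p" by (simp add: u_def)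
    qed (use p in auto)
  qed
  thus ?thesis using that le_u by (simp add: D_def)
qed

text \<open>Knaster-Tarski: moving node p + 1 of the greatest subbalanced vector up to its balance
  position keeps it subbalanced, because balance is monotone and ignores node p + 1.\<close>

lemma greatest_subbalanced_balanced:
  assumes u: "subbalanced u" and greatest: "\<And>x i. subbalanced x \<Longrightarrow> i \<le> Suc n \<Longrightarrow> x i \<le> u i"
    and p: "p < n"
  shows "u (Suc p) = balance u p"
proof (rule ccontr)
  assume "u (Suc p) \<noteq> balance u p"
  hence lt: "u (Suc p) < balance u p" using u p by (force simp: subbalanced_def)
  define v where "v = u(Suc p := balance u p)"
  have uv: "u j \<le> v j" for j using lt by (simp add: v_def)
  have uQ: "u \<in> node_vecs" using u by (simp add: subbalanced_def)
  have vQ: "v \<in> node_vecs" unfolding v_def using node_vecs_upd[OF uQ p] balance_bounds[OF uQ p] by simp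
  have "subbalanced v" unfolding subbalanced_def
  proof (intro conjI allI impI vQ)
    fix p' assume p': "p' < n"
    show "v (Suc p') \<le> balance v p'"
    proof (cases "p' = p")
      case True
      thus ?thesis by (simp add: v_def balance_fun_upd)
    next
      case False
      have "v (Suc p') = u (Suc p')" using False by (simp add: v_def)
      also have "\<dots> \<le> balance u p'" using u p' by (simp add: subbalanced_def)
      also have "\<dots> \<le> balance v p'" using uv by (intro balance_mono[OF uQ vQ p'])
      finally show ?thesis .
    qed
  qed
  from greatest[OF this, of "Suc p"] show False using lt p by (simp add: v_def)
qed

lemma balanced_equioscillating:
  assumes u: "u \<in> node_vecs" and bal: "\<And>p. p < n \<Longrightarrow> u (Suc p) = balance u p"
  shows "equioscillating u"
proof -
  have balances: "balances u p (u (Suc p))" if "p < n" "u p < u (Suc (Suc p))" for p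
    using balances_balance[OF u that] bal[OF that(1)] by simp
  have same: "u p < u (Suc p) \<longleftrightarrow> u (Suc p) < u (Suc (Suc p))" if p: "p < n" for p
  proof (cases "u p < u (Suc (Suc p))")
    case True
    thus ?thesis using balances[OF p True] by (simp add: balances_def)
  next
    case False
    thus ?thesis using node_vecs_mono[OF u, of p "Suc p"] node_vecs_mono[OF u, of "Suc p" "Suc (Suc p)"] p
      by linarith
  qed
  have "u q < u (Suc q) \<longleftrightarrow> u 0 < u (Suc 0)" if "q \<le> n" for q
    using that by (induction q) (auto simp: same)
  moreover obtain q where "q \<le> n" "u q < u (Suc q)" using node_vecs_nondegenerate_arc[OF u] by blast
  ultimately have strict: "u q < u (Suc q)" if "q \<le> n" for q using that by blast
  have "arc_max u p = arc_max u (Suc p)" if p: "p < n" for p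
    using balances[OF p] strict[of p] strict[of "Suc p"] p by (simp add: balances_def)
  hence "arc_max u q = arc_max u 0" if "q \<le> n" for q
    using that
  proof (induction q)
    case (Suc q)
    thus ?case using \<open>\<And>p. p < n \<Longrightarrow> arc_max u p = arc_max u (Suc p)\<close>[of q] by simp
  qed simp
  thus ?thesis using u unfolding equioscillating_def by blast
qed

lemma equioscillating_ex1:
  obtains u where "equioscillating u" "\<And>v i. equioscillating v \<Longrightarrow> i \<le> n \<Longrightarrow> v i = u i"
proof -
  obtain u where u: "subbalanced u" and greatest: "\<And>x i. subbalanced x \<Longrightarrow> i \<le> Suc n \<Longrightarrow> x i \<le> u i"
    by (rule greatest_subbalanced) blast
  have "u (Suc p) = balance u p" if "p < n" for p
    using greatest_subbalanced_balanced[of u p] u greatest that by blast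
  hence "equioscillating u" using u by (intro balanced_equioscillating) (auto simp: subbalanced_def)
  moreover have "v i = u i" if "equioscillating v" "i \<le> n" for v i
    using greatest[OF equioscillating_subbalanced] \<open>equioscillating u\<close> that
    by (intro equioscillating_unique_of_le) auto
  ultimately show ?thesis using that by blast
qed

end

lemma concave_kernels_permute:
  assumes kernels: "concave_kernels n K k" and \<sigma>: "\<sigma> permutes {1..n}"
  shows "concave_kernels n (\<lambda>i. K (\<sigma> i)) (\<lambda>i. k (\<sigma> i))"
proof -
  interpret concave_kernels n K k by (rule kernels)
  have \<sigma>_le: "\<sigma> j \<le> n" if "j \<le> n" for j
    using permutes_in_image[OF \<sigma>, of j] permutes_not_in[OF \<sigma>, of j] that by (cases "j \<in> {1..n}") auto
  show ?thesis
    by unfold_locales (simp_all add: \<sigma>_le periodic real_valued C2 at_zero lim_right lim_left)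
qed

definition sorted_nodes :: "nat \<Rightarrow> (nat \<Rightarrow> nat) \<Rightarrow> (nat \<Rightarrow> real) \<Rightarrow> nat \<Rightarrow> real" where
  "sorted_nodes n \<sigma> y i = ynode n y (\<sigma> i)"

lemma permutes_fixes_ends: "\<sigma> permutes {1..n} \<Longrightarrow> \<sigma> 0 = 0 \<and> \<sigma> (Suc n) = Suc n"
  using permutes_not_in[of \<sigma> "{1..n}"] by auto

lemma Fsum_eq_F:
  assumes \<sigma>: "\<sigma> permutes {1..n}"
  shows "Fsum n K y t = kernel_nodes.F n (\<lambda>i. K (\<sigma> i)) (sorted_nodes n \<sigma> y) t"
proof -
  have "(\<Sum>i\<in>{1..n}. K (\<sigma> i) (t - ynode n y (\<sigma> i))) = (\<Sum>j\<in>{1..n}. K j (t - ynode n y j))"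
    by (rule sum.reindex_bij_betw[OF permutes_imp_bij[OF \<sigma>]])
  moreover have "{0..n} = insert 0 {1..n}" by auto
  ultimately show ?thesis
    using permutes_fixes_ends[OF \<sigma>]
    by (simp add: Fsum_def kernel_nodes.F_def sorted_nodes_def ynode_def)
qed

lemma interval_max_eq_arc_max:
  assumes "\<sigma> permutes {1..n}"
  shows "interval_max n K \<sigma> y q = kernel_nodes.arc_max n (\<lambda>i. K (\<sigma> i)) (sorted_nodes n \<sigma> y) q"
  unfolding interval_max_def kernel_nodes.arc_max_def Fsum_eq_F[OF assms] sorted_nodes_def by simp

lemma sorted_nodes_node_vecs:
  assumes \<sigma>: "\<sigma> permutes {1..n}" and y: "y \<in> Ssigma_cl n \<sigma>"
  shows "sorted_nodes n \<sigma> y \<in> kernel_nodes.node_vecs n"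
  using y permutes_fixes_ends[OF \<sigma>]
  by (auto simp: kernel_nodes.node_vecs_def Ssigma_cl_def sorted_nodes_def ynode_def)

lemma sorted_permutation_values_unique:
  fixes f :: "nat \<Rightarrow> 'a::linorder"
  assumes \<sigma>: "\<sigma> permutes {..<m}" and \<tau>: "\<tau> permutes {..<m}"
    and strict: "\<And>k. Suc k < m \<Longrightarrow> f (\<sigma> k) < f (\<sigma> (Suc k))"
    and weak: "\<And>k. Suc k < m \<Longrightarrow> f (\<tau> k) \<le> f (\<tau> (Suc k))"
    and k: "k < m"
  shows "f (\<sigma> k) = f (\<tau> k)"
proof -
  define xs where "xs = map (f \<circ> \<sigma>) [0..<m]"
  define ys where "ys = map (f \<circ> \<tau>) [0..<m]"
  have "sorted_wrt (<) xs"
    unfolding sorted_wrt_iff_nth_Suc_transp[OF transp_on_less] using strict by (simp add: xs_def)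
  hence xs: "sorted xs" "distinct xs" by (simp_all add: strict_sorted_iff)
  have ys: "sorted ys" unfolding sorted_iff_nth_Suc using weak by (simp add: ys_def)
  have set_eq: "set xs = set ys"
    unfolding xs_def ys_def set_map set_upt atLeast0LessThan image_comp[symmetric]
    using permutes_image[OF \<sigma>] permutes_image[OF \<tau>] by simp
  have "distinct ys"
    using distinct_card[OF xs(2)] set_eq by (intro card_distinct) (simp add: xs_def ys_def)
  hence "xs = ys" using xs ys set_eq by (intro sorted_distinct_set_unique)
  hence "xs ! k = ys ! k" by simp
  thus ?thesis using k by (simp add: xs_def ys_def)
qed

lemma Ssigma_iff_strict:
  "y \<in> Ssigma n \<sigma> \<longleftrightarrow> y \<in> Ssigma_cl n \<sigma> \<and> (\<forall>q\<le>n. sorted_nodes n \<sigma> y q < sorted_nodes n \<sigma> y (Suc q))"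
  by (auto simp: Ssigma_def Ssigma_cl_def sorted_nodes_def less_imp_le)

lemma torus_point_of_sorted_nodes:
  assumes \<sigma>: "\<sigma> permutes {1..n}" and u: "u \<in> kernel_nodes.node_vecs n"
    and strict: "\<And>q. q \<le> n \<Longrightarrow> u q < u (Suc q)"
  obtains y where "y \<in> Ssigma n \<sigma>" "\<And>i. i \<le> Suc n \<Longrightarrow> sorted_nodes n \<sigma> y i = u i"
proof -
  define y where "y j = (if j \<in> {1..n} then u (inv \<sigma> j) else 0)" for j
  have ends: "u 0 = 0" "u (Suc n) = 2*pi" using u by (auto simp: kernel_nodes.node_vecs_def)
  have nodes: "sorted_nodes n \<sigma> y i = u i" if "i \<le> Suc n" for i
  proof (cases "i \<in> {1..n}")
    case True
    thus ?thesis using permutes_in_image[OF \<sigma>, of i] permutes_inverses(2)[OF \<sigma>]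
      by (simp add: sorted_nodes_def ynode_def y_def)
  next
    case False
    hence "i = 0 \<or> i = Suc n" using that by auto
    thus ?thesis using permutes_fixes_ends[OF \<sigma>] ends by (auto simp: sorted_nodes_def ynode_def)
  qed
  have bounds: "0 < u i" "u i < 2*pi" if "i \<in> {1..n}" for i
    using strict[of 0] strict[of i] that ends kernel_nodes.node_vecs_mono[OF u, of 1 i]
      kernel_nodes.node_vecs_mono[OF u, of "Suc i" "Suc n"] by auto
  have "y \<in> torus_pts n" unfolding torus_pts_def
  proof (intro CollectI conjI ballI allI impI)
    fix j assume j: "j \<in> {1..n}"
    hence "inv \<sigma> j \<in> {1..n}" using permutes_in_image[OF permutes_inv[OF \<sigma>]] by simp
    thus "0 \<le> y j" "y j < 2*pi" using bounds j by (simp_all add: y_def less_imp_le)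
  qed (auto simp: y_def)
  hence "y \<in> Ssigma n \<sigma>"
    using nodes strict by (simp add: Ssigma_iff_strict Ssigma_cl_def less_imp_le flip: sorted_nodes_def)
  thus ?thesis using that nodes by blast
qed

lemma torus_pts_eq_of_sorted_nodes:
  assumes \<sigma>: "\<sigma> permutes {1..n}" and y: "y \<in> torus_pts n" and y': "y' \<in> torus_pts n"
    and nodes: "\<And>i. i \<le> n \<Longrightarrow> sorted_nodes n \<sigma> y i = sorted_nodes n \<sigma> y' i"
  shows "y = y'"
proof
  fix j
  show "y j = y' j"
  proof (cases "j \<in> {1..n}")
    case True
    hence "inv \<sigma> j \<in> {1..n}" "\<sigma> (inv \<sigma> j) = j"
      using permutes_in_image[OF permutes_inv[OF \<sigma>]] permutes_inverses(1)[OF \<sigma>] by auto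
    thus ?thesis using nodes[of "inv \<sigma> j"] True by (simp add: sorted_nodes_def ynode_def)
  qed (use y y' in \<open>simp add: torus_pts_def\<close>)
qed

lemma equioscillating_of_interval_max:
  assumes \<sigma>: "\<sigma> permutes {1..n}" and y: "y \<in> Ssigma_cl n \<sigma>"
    and eq: "\<forall>q\<in>{0..n}. interval_max n K \<sigma> y q = interval_max n K \<sigma> y 0"
  shows "kernel_nodes.equioscillating n (\<lambda>i. K (\<sigma> i)) (sorted_nodes n \<sigma> y)"
  unfolding kernel_nodes.equioscillating_def
proof (intro conjI allI impI sorted_nodes_node_vecs[OF \<sigma> y])
  fix q assume "q \<le> n"
  thus "kernel_nodes.arc_max n (\<lambda>i. K (\<sigma> i)) (sorted_nodes n \<sigma> y) q
      = kernel_nodes.arc_max n (\<lambda>i. K (\<sigma> i)) (sorted_nodes n \<sigma> y) 0"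
    using eq[rule_format, of q] by (simp add: interval_max_eq_arc_max[OF \<sigma>])
qed

lemma sorted_nodes_unique:
  assumes \<sigma>: "\<sigma> permutes {1..n}" and \<tau>: "\<tau> permutes {1..n}"
    and y: "y \<in> Ssigma n \<sigma>" and cl: "y \<in> Ssigma_cl n \<tau>" and i: "i \<le> Suc n"
  shows "sorted_nodes n \<sigma> y i = sorted_nodes n \<tau> y i"
  unfolding sorted_nodes_def
proof (rule sorted_permutation_values_unique[where f = "ynode n y" and m = "Suc (Suc n)"
      and \<sigma> = \<sigma> and \<tau> = \<tau> and k = i])
  show "\<sigma> permutes {..<Suc (Suc n)}" "\<tau> permutes {..<Suc (Suc n)}"
    using \<sigma> \<tau> by (auto intro: permutes_subset)
  show "ynode n y (\<sigma> k) < ynode n y (\<sigma> (Suc k))" if "Suc k < Suc (Suc n)" for k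
    using y that by (simp add: Ssigma_def)
  show "ynode n y (\<tau> k) \<le> ynode n y (\<tau> (Suc k))" if "Suc k < Suc (Suc n)" for k
    using cl that by (simp add: Ssigma_cl_def)
qed (use i in simp)

lemma equiosc_point_iff_equioscillating:
  assumes \<sigma>: "\<sigma> permutes {1..n}" and y: "y \<in> Ssigma n \<sigma>"
  shows "equiosc_point n K y \<longleftrightarrow> kernel_nodes.equioscillating n (\<lambda>i. K (\<sigma> i)) (sorted_nodes n \<sigma> y)"
proof
  assume "equiosc_point n K y"
  then obtain \<tau> where \<tau>: "\<tau> permutes {1..n}" and cl: "y \<in> Ssigma_cl n \<tau>"
    and eq: "\<forall>q\<in>{0..n}. interval_max n K \<tau> y q = interval_max n K \<tau> y 0"
    unfolding equiosc_point_def by blast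
  have same: "interval_max n K \<tau> y q = interval_max n K \<sigma> y q" if "q \<le> n" for q
    using sorted_nodes_unique[OF \<sigma> \<tau> y cl, of q] sorted_nodes_unique[OF \<sigma> \<tau> y cl, of "Suc q"] that
    by (simp add: interval_max_def sorted_nodes_def)
  have "\<forall>q\<in>{0..n}. interval_max n K \<sigma> y q = interval_max n K \<sigma> y 0"
  proof
    fix q assume q: "q \<in> {0..n}"
    have "interval_max n K \<sigma> y q = interval_max n K \<tau> y q" using same q by simp
    also have "\<dots> = interval_max n K \<tau> y 0" using eq q by blast
    also have "\<dots> = interval_max n K \<sigma> y 0" using same[of 0] by simp
    finally show "interval_max n K \<sigma> y q = interval_max n K \<sigma> y 0" .
  qed
  moreover have "y \<in> Ssigma_cl n \<sigma>" using y by (simp add: Ssigma_iff_strict)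
  ultimately show "kernel_nodes.equioscillating n (\<lambda>i. K (\<sigma> i)) (sorted_nodes n \<sigma> y)"
    using equioscillating_of_interval_max[OF \<sigma>] by blast
next
  assume E: "kernel_nodes.equioscillating n (\<lambda>i. K (\<sigma> i)) (sorted_nodes n \<sigma> y)"
  have "\<forall>q\<in>{0..n}. interval_max n K \<sigma> y q = interval_max n K \<sigma> y 0"
  proof
    fix q assume "q \<in> {0..n}"
    thus "interval_max n K \<sigma> y q = interval_max n K \<sigma> y 0"
      unfolding interval_max_eq_arc_max[OF \<sigma>] by (intro kernel_nodes.equioscillatingD(2)[OF E]) simp
  qed
  moreover have "y \<in> Ssigma_cl n \<sigma>" "y \<in> torus_pts n"
    using y by (auto simp: Ssigma_iff_strict Ssigma_cl_def)
  ultimately show "equiosc_point n K y" using \<sigma> unfolding equiosc_point_def by blast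
qed

context concave_kernels
begin

lemma equiosc_point_in_open_simplex:
  assumes "equiosc_point n K y"
  obtains \<sigma> where "\<sigma> permutes {1..n}" "y \<in> Ssigma n \<sigma>"
proof -
  obtain \<sigma> where \<sigma>: "\<sigma> permutes {1..n}" and cl: "y \<in> Ssigma_cl n \<sigma>"
    and eq: "\<forall>q\<in>{0..n}. interval_max n K \<sigma> y q = interval_max n K \<sigma> y 0"
    using assms unfolding equiosc_point_def by blast
  interpret permuted: concave_kernels n "\<lambda>i. K (\<sigma> i)" "\<lambda>i. k (\<sigma> i)"
    by (rule concave_kernels_permute[OF concave_kernels_axioms \<sigma>])
  have "permuted.equioscillating (sorted_nodes n \<sigma> y)"
    by (rule equioscillating_of_interval_max[OF \<sigma> cl eq])
  hence "y \<in> Ssigma n \<sigma>" using cl permuted.equioscillating_strict by (simp add: Ssigma_iff_strict)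
  thus ?thesis using that \<sigma> by blast
qed

lemma equiosc_point_unique_in_simplex:
  assumes \<sigma>: "\<sigma> permutes {1..n}"
  shows "\<exists>!y. y \<in> Ssigma n \<sigma> \<and> equiosc_point n K y"
proof -
  interpret permuted: concave_kernels n "\<lambda>i. K (\<sigma> i)" "\<lambda>i. k (\<sigma> i)"
    by (rule concave_kernels_permute[OF concave_kernels_axioms \<sigma>])
  obtain u where u: "permuted.equioscillating u"
    and unique: "\<And>v i. permuted.equioscillating v \<Longrightarrow> i \<le> n \<Longrightarrow> v i = u i"
    by (rule permuted.equioscillating_ex1) blast
  obtain y where y: "y \<in> Ssigma n \<sigma>" and nodes: "\<And>i. i \<le> Suc n \<Longrightarrow> sorted_nodes n \<sigma> y i = u i"
    using torus_point_of_sorted_nodes[OF \<sigma> permuted.equioscillatingD(1)[OF u]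
        permuted.equioscillating_strict[OF u]] by blast
  have "equiosc_point n K y"
    using permuted.equioscillating_cong[OF nodes] u equiosc_point_iff_equioscillating[OF \<sigma> y] by simp
  moreover have "y' = y" if y': "y' \<in> Ssigma n \<sigma>" "equiosc_point n K y'" for y'
  proof (rule torus_pts_eq_of_sorted_nodes[OF \<sigma>])
    show "y' \<in> torus_pts n" "y \<in> torus_pts n" using y' y by (simp_all add: Ssigma_def)
    have "permuted.equioscillating (sorted_nodes n \<sigma> y')"
      using y' equiosc_point_iff_equioscillating[OF \<sigma>] by blast
    thus "sorted_nodes n \<sigma> y' i = sorted_nodes n \<sigma> y i" if "i \<le> n" for i
      using unique[of _ i] nodes[of i] that by simp
  qed
  ultimately show ?thesis using y by blast
qed

end

theorem corollary9p4:
  fixes n :: nat and K :: "nat \<Rightarrow> real \<Rightarrow> ereal" and k :: "nat \<Rightarrow> real \<Rightarrow> real"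
  assumes periodic: "\<And>j t. j \<le> n \<Longrightarrow> K j (t + 2*pi) = K j t"
    and real_valued: "\<And>j t. j \<le> n \<Longrightarrow> t \<in> {0<..<2*pi} \<Longrightarrow> K j t = ereal (k j t)"
    and C2: "\<And>j. j \<le> n \<Longrightarrow> \<exists>k' k''. (\<forall>t\<in>{0<..<2*pi}.
               (k j has_real_derivative k' t) (at t) \<and> (k' has_real_derivative k'' t) (at t)
               \<and> k'' t < 0) \<and> continuous_on {0<..<2*pi} k''"
    and at_zero: "\<And>j. j \<le> n \<Longrightarrow> K j 0 = -\<infinity>"
    and lim_right: "\<And>j. j \<le> n \<Longrightarrow> filterlim (k j) at_bot (at_right 0)"
    and lim_left: "\<And>j. j \<le> n \<Longrightarrow> filterlim (k j) at_bot (at_left (2*pi))"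
  shows "(\<forall>y. equiosc_point n K y \<longrightarrow> (\<exists>\<sigma>. \<sigma> permutes {1..n} \<and> y \<in> Ssigma n \<sigma>))
       \<and> (\<forall>\<sigma>. \<sigma> permutes {1..n} \<longrightarrow> (\<exists>!y. y \<in> Ssigma n \<sigma> \<and> equiosc_point n K y))"
proof -
  interpret concave_kernels n K k by unfold_locales (fact assms)+
  show ?thesis using equiosc_point_in_open_simplex equiosc_point_unique_in_simplex by metis
qed

end
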